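(* Fix $\alpha,\lambda>0$. Let $V_t$ be the expected number of individuals alive at time $t$ in the single-site ageing branching process where each individual has an Exp(1) lifetime and an individual born at time $\bar t$ produces children at the arrival times, during its life, of an inhomogeneous Poisson process of intensity $\lambda e^{-\alpha(t-\bar t)}$ (started from $V_0>0$ individuals of age $0$). Let $S_t$ be the expected number of individuals alive at time $t$ in the classical continuous-time branching process in which each individual dies at rate $1$ and reproduces at rate $\lambda/(1+\alpha)$, started with $S_0=V_0$ individuals (so $S_t=V_0e^{(\lambda/(\alpha+1)-1)t}$). As $t\to\infty$: (1) if $\lambda>\alpha+1$, both $V_t,S_t\to\infty$, $V_t\sim\frac{\lambda}{\lambda-\alpha}V_0e^{(\lambda-\alpha-1)t}$, and $V_t>S_t$ for all sufficiently large $t$; (2) if $\lambda=\alpha+1$, $S_t=V_0$ for all $t\ge0$ and $V_t\to\lambda V_0$; (3) if $\alpha<\lambda<\alpha+1$, both $V_t,S_t\to0$, $V_t\sim\frac{\lambda}{\lambda-\alpha}V_0e^{(\lambda-\alpha-1)t}$, and $S_t>V_t$ for all sufficiently large $t$; (4) if $\lambda=\alpha$, both $V_t,S_t\to0$, $V_t\sim\alpha tV_0e^{-t}$, and $S_t>V_t$ for all sufficiently large $t$; (5) if $\lambda<\alpha$, both $V_t,S_t\to0$, $V_t\sim\frac{\alpha}{\alpha-\lambda}V_0e^{-t}$, and $S_t>V_t$ for all sufficiently large $t$. *)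

theory Defs
  imports "HOL-Analysis.Analysis" "HOL-Library.Landau_Symbols"
begin

text \<open>First-moment (mean) equations of the single-site ageing branching process.
  b t is the expected birth-rate density at time t; an individual born at time s is alive
  at time t \<ge> s with probability exp(-(t-s)) and, while alive, gives birth at rate
  lam * exp(-alpha*(t-s)). The initial V0 individuals have age 0 at time 0.\<close>

definition ageing_birth_eq :: "real \<Rightarrow> real \<Rightarrow> real \<Rightarrow> (real \<Rightarrow> real) \<Rightarrow> bool" where
  "ageing_birth_eq alpha lam V0 b \<longleftrightarrow>
     continuous_on {0..} b \<and>
     (\<forall>t\<ge>0. b t = V0 * lam * exp (-(1 + alpha) * t)
                 + integral {0..t} (\<lambda>s. b s * lam * exp (-(1 + alpha) * (t - s))))"

definition ageing_mean :: "real \<Rightarrow> (real \<Rightarrow> real) \<Rightarrow> real \<Rightarrow> real" where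
  "ageing_mean V0 b t = V0 * exp (- t) + integral {0..t} (\<lambda>s. b s * exp (-(t - s)))"

definition classical_mean :: "real \<Rightarrow> real \<Rightarrow> real \<Rightarrow> real \<Rightarrow> real" where
  "classical_mean alpha lam V0 t = V0 * exp ((lam / (alpha + 1) - 1) * t)"

end

theory Submission
  imports Defs "HOL-Real_Asymp.Real_Asymp"
begin

text \<open>Multiplying the renewal equation by exp((1 + \<alpha>) t) turns it into
  u t = \<lambda> V0 + \<lambda> \<integral>[0,t] u, whose only continuous solution is u t = \<lambda> V0 exp(\<lambda> t).
  Hence the birth rate is b t = \<lambda> V0 exp((\<lambda> - \<alpha> - 1) t), and the mean is explicit:
  V t = V0 (\<lambda> exp((\<lambda> - \<alpha> - 1) t) - \<alpha> exp(-t)) / (\<lambda> - \<alpha>), or V0 (1 + \<alpha> t) exp(-t)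
  when \<lambda> = \<alpha>. Each regime is then a comparison of exponential rates; the identity
  (\<lambda> - \<alpha> - 1) - (\<lambda>/(\<alpha> + 1) - 1) = \<alpha>/(\<alpha> + 1) (\<lambda> - \<alpha> - 1) shows that the ageing
  process outgrows the classical one exactly in the supercritical regime.\<close>

lemma integral_equation_exp_solution:
  fixes c k t :: real and u :: "real \<Rightarrow> real"
  assumes "continuous_on {0..t} u" "t \<ge> 0"
    and "\<And>x. x \<in> {0..t} \<Longrightarrow> u x = c + k * integral {0..x} u"
  shows "u t = c * exp (k * t)"
proof -
  define H where "H x = (c + k * integral {0..x} u) * exp (- k * x)" for x
  have "\<exists>C. \<forall>x\<in>{0..t}. H x = C"
  proof (rule has_field_derivative_zero_constant)
    fix x assume x: "x \<in> {0..t}"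
    have "((\<lambda>x. integral {0..x} u) has_real_derivative u x) (at x within {0..t})"
      by (rule integral_has_real_derivative[OF assms(1) x])
    then have "(H has_real_derivative k * (u x - (c + k * integral {0..x} u)) * exp (- k * x))
        (at x within {0..t})"
      unfolding H_def by (auto intro!: derivative_eq_intros simp: algebra_simps)
    then show "(H has_real_derivative 0) (at x within {0..t})"
      using assms(3)[OF x] by simp
  qed simp
  then have "H t = H 0"
    using assms(2) by force
  then have "c + k * integral {0..t} u = c * exp (k * t)"
    by (simp add: H_def exp_minus field_simps)
  with assms(2,3) show ?thesis
    by simp
qed

lemma volterra_exp_kernel_solution:
  fixes a c k t :: real and b :: "real \<Rightarrow> real"
  assumes "continuous_on {0..} b" "t \<ge> 0"
    and "\<And>x. x \<ge> 0 \<Longrightarrow>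
      b x = c * exp (- a * x) + integral {0..x} (\<lambda>s. b s * k * exp (- a * (x - s)))"
  shows "b t = c * exp ((k - a) * t)"
proof -
  define u where "u s = b s * exp (a * s)" for s
  have "u t = c * exp (k * t)"
  proof (rule integral_equation_exp_solution)
    show "continuous_on {0..t} u"
      unfolding u_def by (intro continuous_intros continuous_on_subset[OF assms(1)]) auto
    fix x assume "x \<in> {0..t}"
    then have x: "x \<ge> 0" by simp
    have "integral {0..x} (\<lambda>s. b s * k * exp (- a * (x - s)))
        = integral {0..x} (\<lambda>s. k * exp (- a * x) * u s)"
      by (intro integral_cong) (simp add: u_def right_diff_distrib exp_diff exp_minus field_simps)
    then have "b x = exp (- a * x) * (c + k * integral {0..x} u)"
      using assms(3)[OF x] by (simp add: algebra_simps)
    then show "u x = c + k * integral {0..x} u"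
      by (simp add: u_def mult.assoc flip: exp_add)
  qed (use assms(2) in auto)
  then show ?thesis
    by (simp add: u_def left_diff_distrib exp_diff field_simps)
qed

lemma ageing_birth_rate:
  assumes "ageing_birth_eq alpha lam V0 b" "t \<ge> 0"
  shows "b t = V0 * lam * exp ((lam - alpha - 1) * t)"
  using volterra_exp_kernel_solution[of b t "V0 * lam" "1 + alpha" lam] assms
  unfolding ageing_birth_eq_def by (simp add: algebra_simps)

lemma has_integral_exp_mult:
  fixes r a b :: real
  assumes "r \<noteq> 0" "a \<le> b"
  shows "((\<lambda>s. exp (r * s)) has_integral (exp (r * b) - exp (r * a)) / r) {a..b}"
proof -
  have "((\<lambda>s. exp (r * s)) has_integral exp (r * b) / r - exp (r * a) / r) {a..b}"
    by (rule fundamental_theorem_of_calculus[OF assms(2)])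
      (use assms(1) in \<open>auto intro!: derivative_eq_intros
        simp flip: has_real_derivative_iff_has_vector_derivative\<close>)
  then show ?thesis
    by (simp add: diff_divide_distrib)
qed

lemma ageing_mean_eq_integral:
  assumes "ageing_birth_eq alpha lam V0 b" "t \<ge> 0"
  shows "ageing_mean V0 b t
    = V0 * exp (- t) * (1 + lam * integral {0..t} (\<lambda>s. exp ((lam - alpha) * s)))"
proof -
  have "integral {0..t} (\<lambda>s. b s * exp (- (t - s)))
      = integral {0..t} (\<lambda>s. V0 * lam * exp (- t) * exp ((lam - alpha) * s))"
    using assms by (intro integral_cong)
      (simp add: ageing_birth_rate mult.assoc algebra_simps flip: exp_add)
  then show ?thesis
    by (simp add: ageing_mean_def algebra_simps)
qed

lemma ageing_mean_closed_form:
  assumes "ageing_birth_eq alpha lam V0 b" "lam \<noteq> alpha" "t \<ge> 0"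
  shows "ageing_mean V0 b t
    = lam / (lam - alpha) * V0 * exp ((lam - alpha - 1) * t) - alpha / (lam - alpha) * V0 * exp (- t)"
proof -
  have d: "lam - alpha \<noteq> 0"
    using assms(2) by simp
  have "integral {0..t} (\<lambda>s. exp ((lam - alpha) * s)) = (exp ((lam - alpha) * t) - 1) / (lam - alpha)"
    using integral_unique[OF has_integral_exp_mult[OF d assms(3)]] by simp
  then have "ageing_mean V0 b t
      = V0 * exp (- t) * (1 + lam * ((exp ((lam - alpha) * t) - 1) / (lam - alpha)))"
    by (simp add: ageing_mean_eq_integral[OF assms(1,3)])
  also have "\<dots> = lam / (lam - alpha) * V0 * (exp (- t) * exp ((lam - alpha) * t))
      - alpha / (lam - alpha) * V0 * exp (- t)"
  proof -
    have "x * (1 + lam * ((E - 1) / \<delta>)) = lam / \<delta> * x * E - (lam - \<delta>) / \<delta> * x"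
      if "\<delta> \<noteq> 0" for x E \<delta> :: real
      using that by (simp add: field_simps)
    from this[OF d] show ?thesis
      by (simp add: mult.assoc)
  qed
  also have "exp (- t) * exp ((lam - alpha) * t) = exp ((lam - alpha - 1) * t)"
    by (simp add: algebra_simps flip: exp_add)
  finally show ?thesis .
qed

lemma ageing_mean_closed_form_resonant:
  assumes "ageing_birth_eq alpha alpha V0 b" "t \<ge> 0"
  shows "ageing_mean V0 b t = V0 * (1 + alpha * t) * exp (- t)"
  using assms by (simp add: ageing_mean_eq_integral)

lemma tendsto_exp_mult_neg:
  fixes k :: real
  assumes "k < 0"
  shows "((\<lambda>t. exp (k * t)) \<longlongrightarrow> 0) at_top"
  using assms by real_asymp

lemma exp_sum_asymp_equiv_leading:
  fixes A B p r :: real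
  assumes "A \<noteq> 0" "r < p"
  shows "(\<lambda>t. A * exp (p * t) + B * exp (r * t)) \<sim>[at_top] (\<lambda>t. A * exp (p * t))"
proof (rule asymp_equivI')
  have "((\<lambda>t. 1 + B / A * exp ((r - p) * t)) \<longlongrightarrow> 1 + B / A * 0) at_top"
    by (intro tendsto_intros tendsto_exp_mult_neg) (use assms in auto)
  moreover have "1 + B / A * exp ((r - p) * t) = (A * exp (p * t) + B * exp (r * t)) / (A * exp (p * t))"
    for t
    using assms(1) by (simp add: field_simps flip: exp_add)
  ultimately show "((\<lambda>t. (A * exp (p * t) + B * exp (r * t)) / (A * exp (p * t))) \<longlongrightarrow> 1) at_top"
    by simp
qed

lemma eventually_exp_sum_less:
  fixes A B C p q r :: real
  assumes "A > 0" "r < p" "q < p"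
  shows "\<forall>\<^sub>F t in at_top. B * exp (r * t) + C * exp (q * t) < A * exp (p * t)"
proof -
  have "((\<lambda>t. B * exp ((r - p) * t) + C * exp ((q - p) * t)) \<longlongrightarrow> B * 0 + C * 0) at_top"
    by (intro tendsto_intros tendsto_exp_mult_neg) (use assms in auto)
  then have "\<forall>\<^sub>F t in at_top. B * exp ((r - p) * t) + C * exp ((q - p) * t) < A"
    using assms(1) by (auto dest: order_tendstoD(2))
  then show ?thesis
  proof eventually_elim
    case (elim t)
    then have "(B * exp ((r - p) * t) + C * exp ((q - p) * t)) * exp (p * t) < A * exp (p * t)"
      by simp
    then show ?case
      by (simp add: algebra_simps flip: exp_add)
  qed
qed

lemma ageing_rate_minus_classical_rate:
  fixes alpha lam :: real
  assumes "alpha + 1 \<noteq> 0"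
  shows "(lam - alpha - 1) - (lam / (alpha + 1) - 1) = alpha / (alpha + 1) * (lam - alpha - 1)"
  using assms by (simp add: field_simps)

lemma filterlim_classical_mean_at_top:
  fixes alpha lam V0 :: real
  assumes "alpha > -1" "V0 > 0" "lam > alpha + 1"
  shows "filterlim (classical_mean alpha lam V0) at_top at_top"
  using assms unfolding classical_mean_def by real_asymp

lemma classical_mean_critical:
  fixes alpha lam V0 t :: real
  assumes "alpha + 1 \<noteq> 0" "lam = alpha + 1"
  shows "classical_mean alpha lam V0 t = V0"
  using assms by (simp add: classical_mean_def)

lemma tendsto_classical_mean_zero:
  fixes alpha lam V0 :: real
  assumes "alpha > -1" "lam < alpha + 1"
  shows "(classical_mean alpha lam V0 \<longlongrightarrow> 0) at_top"
  using assms unfolding classical_mean_def by real_asymp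

lemma eventually_ageing_mean_eq:
  assumes "ageing_birth_eq alpha lam V0 b" "lam \<noteq> alpha"
  shows "\<forall>\<^sub>F t in at_top. ageing_mean V0 b t
    = lam / (lam - alpha) * V0 * exp ((lam - alpha - 1) * t) - alpha / (lam - alpha) * V0 * exp (- t)"
  using eventually_ge_at_top[of 0] by eventually_elim (rule ageing_mean_closed_form[OF assms])

lemma eventually_ageing_mean_eq_resonant:
  assumes "ageing_birth_eq alpha alpha V0 b"
  shows "\<forall>\<^sub>F t in at_top. ageing_mean V0 b t = V0 * (1 + alpha * t) * exp (- t)"
  using eventually_ge_at_top[of 0] by eventually_elim (rule ageing_mean_closed_form_resonant[OF assms])

lemma ageing_mean_asymp_equiv:
  assumes "ageing_birth_eq alpha lam V0 b" "V0 \<noteq> 0" "0 < lam" "alpha < lam"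
  shows "ageing_mean V0 b \<sim>[at_top] (\<lambda>t. lam / (lam - alpha) * V0 * exp ((lam - alpha - 1) * t))"
proof -
  have "(\<lambda>t. lam / (lam - alpha) * V0 * exp ((lam - alpha - 1) * t)
        + (- alpha / (lam - alpha) * V0) * exp ((- 1) * t))
      \<sim>[at_top] (\<lambda>t. lam / (lam - alpha) * V0 * exp ((lam - alpha - 1) * t))"
    using assms(2-4) by (intro exp_sum_asymp_equiv_leading) auto
  then show ?thesis
    using asymp_equiv_refl_ev[OF eventually_ageing_mean_eq[OF assms(1)]] assms(4)
    by (auto elim: asymp_equiv_trans)
qed

lemma ageing_mean_asymp_equiv_resonant:
  assumes "ageing_birth_eq alpha lam V0 b" "lam = alpha" "alpha > 0" "V0 > 0"
  shows "ageing_mean V0 b \<sim>[at_top] (\<lambda>t. alpha * t * V0 * exp (- t))"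
proof -
  have equiv: "(\<lambda>t. V0 * (1 + alpha * t) * exp (- t)) \<sim>[at_top] (\<lambda>t. alpha * t * V0 * exp (- t))"
    using assms(3,4) by real_asymp
  note eventually_ageing_mean_eq_resonant[OF assms(1)[unfolded assms(2)]]
  from asymp_equiv_trans[OF asymp_equiv_refl_ev[OF this] equiv]
  show ?thesis .
qed

lemma ageing_mean_asymp_equiv_death_dominated:
  assumes "ageing_birth_eq alpha lam V0 b" "V0 \<noteq> 0" "0 < lam" "lam < alpha"
  shows "ageing_mean V0 b \<sim>[at_top] (\<lambda>t. alpha / (alpha - lam) * V0 * exp (- t))"
proof -
  have "(\<lambda>t. alpha / (alpha - lam) * V0 * exp ((- 1) * t)
        + lam / (lam - alpha) * V0 * exp ((lam - alpha - 1) * t))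
      \<sim>[at_top] (\<lambda>t. alpha / (alpha - lam) * V0 * exp ((- 1) * t))"
    using assms(2-4) by (intro exp_sum_asymp_equiv_leading) auto
  moreover have "alpha / (alpha - lam) = - (alpha / (lam - alpha))"
    by (simp add: minus_divide_right)
  ultimately show ?thesis
    using asymp_equiv_refl_ev[OF eventually_ageing_mean_eq[OF assms(1)]] assms(4)
    by (auto elim: asymp_equiv_trans simp: add.commute)
qed

lemma filterlim_ageing_mean_at_top:
  assumes "ageing_birth_eq alpha lam V0 b" "alpha > 0" "V0 > 0" "lam > alpha + 1"
  shows "filterlim (ageing_mean V0 b) at_top at_top"
proof -
  have "filterlim (\<lambda>t. lam / (lam - alpha) * V0 * exp ((lam - alpha - 1) * t)) at_top at_top"
    using assms(2-4) by real_asymp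
  with ageing_mean_asymp_equiv[OF assms(1)] assms(2-4) show ?thesis
    by (auto intro: asymp_equiv_at_top_transfer asymp_equiv_symI)
qed

lemma tendsto_ageing_mean_zero:
  assumes "ageing_birth_eq alpha lam V0 b" "lam < alpha + 1"
  shows "(ageing_mean V0 b \<longlongrightarrow> 0) at_top"
proof (cases "lam = alpha")
  case True
  have "((\<lambda>t. V0 * (1 + alpha * t) * exp (- t)) \<longlongrightarrow> 0) at_top"
    by real_asymp
  with tendsto_cong[OF eventually_ageing_mean_eq_resonant] assms(1) True show ?thesis
    by simp
next
  case False
  have "((\<lambda>t::real. exp (- t)) \<longlongrightarrow> 0) at_top"
    by real_asymp
  then have "((\<lambda>t. lam / (lam - alpha) * V0 * exp ((lam - alpha - 1) * t)
      - alpha / (lam - alpha) * V0 * exp (- t))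
      \<longlongrightarrow> lam / (lam - alpha) * V0 * 0 - alpha / (lam - alpha) * V0 * 0) at_top"
    by (intro tendsto_intros tendsto_exp_mult_neg) (use assms(2) in auto)
  with tendsto_cong[OF eventually_ageing_mean_eq[OF assms(1) False]] show ?thesis
    by simp
qed

lemma tendsto_ageing_mean_critical:
  assumes "ageing_birth_eq alpha lam V0 b" "lam = alpha + 1"
  shows "(ageing_mean V0 b \<longlongrightarrow> lam * V0) at_top"
proof -
  have "((\<lambda>t. (alpha + 1) * V0 - alpha * V0 * exp (- t)) \<longlongrightarrow> (alpha + 1) * V0) at_top"
    by real_asymp
  with tendsto_cong[OF eventually_ageing_mean_eq[OF assms(1)]] assms(2) show ?thesis
    by simp
qed

lemma eventually_classical_mean_less_ageing_mean:
  assumes "ageing_birth_eq alpha lam V0 b" "alpha > 0" "V0 > 0" "lam > alpha + 1"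
  shows "\<forall>\<^sub>F t in at_top. classical_mean alpha lam V0 t < ageing_mean V0 b t"
proof -
  have "0 < alpha / (alpha + 1) * (lam - alpha - 1)"
    using assms(2,4) by simp
  then have "lam / (alpha + 1) - 1 < lam - alpha - 1"
    using ageing_rate_minus_classical_rate[of alpha lam] assms(2) by linarith
  then have dominated: "\<forall>\<^sub>F t in at_top. alpha / (lam - alpha) * V0 * exp ((- 1) * t)
      + V0 * exp ((lam / (alpha + 1) - 1) * t) < lam / (lam - alpha) * V0 * exp ((lam - alpha - 1) * t)"
    using assms(2-4) by (intro eventually_exp_sum_less) auto
  have "lam \<noteq> alpha"
    using assms(4) by simp
  from eventually_ageing_mean_eq[OF assms(1) this] dominated show ?thesis
    by eventually_elim (simp add: classical_mean_def)
qed

lemma eventually_ageing_mean_less_classical_mean: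
  assumes "ageing_birth_eq alpha lam V0 b" "alpha > 0" "V0 > 0" "0 < lam" "lam < alpha + 1"
  shows "\<forall>\<^sub>F t in at_top. ageing_mean V0 b t < classical_mean alpha lam V0 t"
proof -
  define q where "q = lam / (alpha + 1) - 1"
  have "-1 < q"
    using assms(2,4) by (simp add: q_def)
  show ?thesis
  proof (cases "lam = alpha")
    case True
    have "\<forall>\<^sub>F t in at_top. V0 * (1 + alpha * t) * exp (- t) < V0 * exp (q * t)"
      using \<open>-1 < q\<close> assms(2,3) by real_asymp
    with eventually_ageing_mean_eq_resonant[OF assms(1)[unfolded True]] show ?thesis
      by eventually_elim (simp add: classical_mean_def q_def True)
  next
    case False
    have "alpha / (alpha + 1) * (lam - alpha - 1) < 0"
      using assms(2,5) by (simp add: mult_pos_neg divide_neg_pos)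
    then have "lam - alpha - 1 < q"
      using ageing_rate_minus_classical_rate[of alpha lam] assms(2) by (simp add: q_def)
    then have "\<forall>\<^sub>F t in at_top. lam / (lam - alpha) * V0 * exp ((lam - alpha - 1) * t)
        + (- alpha / (lam - alpha) * V0) * exp ((- 1) * t) < V0 * exp (q * t)"
      using \<open>-1 < q\<close> assms(3) by (intro eventually_exp_sum_less) auto
    with eventually_ageing_mean_eq[OF assms(1) False] show ?thesis
      by eventually_elim (simp add: classical_mean_def q_def)
  qed
qed

theorem theorem5p2:
  fixes alpha lam V0 :: real and b :: "real \<Rightarrow> real"
  assumes "alpha > 0" "lam > 0" "V0 > 0"
    and "ageing_birth_eq alpha lam V0 b"
  defines "V \<equiv> ageing_mean V0 b" and "S \<equiv> classical_mean alpha lam V0"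
  shows
   "(lam > alpha + 1 \<longrightarrow>
       filterlim V at_top at_top \<and> filterlim S at_top at_top \<and>
       V \<sim>[at_top] (\<lambda>t. lam / (lam - alpha) * V0 * exp ((lam - alpha - 1) * t)) \<and>
       (\<forall>\<^sub>F t in at_top. V t > S t))
  \<and> (lam = alpha + 1 \<longrightarrow> (\<forall>t\<ge>0. S t = V0) \<and> (V \<longlongrightarrow> lam * V0) at_top)
  \<and> (alpha < lam \<and> lam < alpha + 1 \<longrightarrow>
       (V \<longlongrightarrow> 0) at_top \<and> (S \<longlongrightarrow> 0) at_top \<and>
       V \<sim>[at_top] (\<lambda>t. lam / (lam - alpha) * V0 * exp ((lam - alpha - 1) * t)) \<and>
       (\<forall>\<^sub>F t in at_top. S t > V t))
  \<and> (lam = alpha \<longrightarrow>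
       (V \<longlongrightarrow> 0) at_top \<and> (S \<longlongrightarrow> 0) at_top \<and>
       V \<sim>[at_top] (\<lambda>t. alpha * t * V0 * exp (- t)) \<and>
       (\<forall>\<^sub>F t in at_top. S t > V t))
  \<and> (lam < alpha \<longrightarrow>
       (V \<longlongrightarrow> 0) at_top \<and> (S \<longlongrightarrow> 0) at_top \<and>
       V \<sim>[at_top] (\<lambda>t. alpha / (alpha - lam) * V0 * exp (- t)) \<and>
       (\<forall>\<^sub>F t in at_top. S t > V t))"
  unfolding V_def S_def
  using assms(1-3)
    filterlim_ageing_mean_at_top[OF assms(4)] filterlim_classical_mean_at_top
    ageing_mean_asymp_equiv[OF assms(4)] eventually_classical_mean_less_ageing_mean[OF assms(4)]
    classical_mean_critical tendsto_ageing_mean_critical[OF assms(4)]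
    tendsto_ageing_mean_zero[OF assms(4)] tendsto_classical_mean_zero
    eventually_ageing_mean_less_classical_mean[OF assms(4)]
    ageing_mean_asymp_equiv_resonant[OF assms(4)]
    ageing_mean_asymp_equiv_death_dominated[OF assms(4)]
  by auto

end
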